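(* Let $\kappa$ be an uncountable regular cardinal and suppose $2^\omega>\kappa$. Then there is a subset of $\kappa^\kappa$ which is open (in the usual topology) and $\kappa$-Borel but not $\kappa$-open.
   Context: The usual topology on $\kappa^\kappa$ is generated by the sets $N_\eta=\{\zeta\in\kappa^\kappa\mid\eta\subseteq\zeta\}$, $\eta:\alpha\to\kappa$, $\alpha<\kappa$. Basic $\kappa$-open sets are the sets $N_\eta=\{\zeta\in\kappa^\kappa\mid\eta\subseteq\zeta\}$ where $\eta:X\to\kappa$ with $X\subseteq\kappa$, $|X|<\kappa$, together with $\emptyset$. A set is $\kappa$-open if it is a union of at most $\kappa$ basic $\kappa$-open sets. The $\kappa$-Borel sets form the smallest class containing the basic $\kappa$-open sets and closed under complements, unions of at most $\kappa$ sets and intersections of at most $\kappa$ sets. *)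

theory Defs
  imports Main
begin

text \<open>The cardinal kappa is represented by a cardinal order r on the whole type 'k
  (so Field r = UNIV and the elements of 'k are the ordinals below kappa).\<close>

definition Nbhd :: "'k set \<Rightarrow> ('k \<Rightarrow> 'k) \<Rightarrow> ('k \<Rightarrow> 'k) set" where
  "Nbhd X \<eta> = {\<zeta>. \<forall>x\<in>X. \<zeta> x = \<eta> x}"

definition usual_open :: "'k rel \<Rightarrow> ('k \<Rightarrow> 'k) set \<Rightarrow> bool" where
  "usual_open r U \<longleftrightarrow>
     (\<exists>S. S \<subseteq> {Nbhd (underS r a) \<eta> | a \<eta>. True} \<and> U = \<Union>S)"

definition basic_kopen :: "'k rel \<Rightarrow> ('k \<Rightarrow> 'k) set \<Rightarrow> bool" where
  "basic_kopen r B \<longleftrightarrow> B = {} \<or> (\<exists>X \<eta>. (card_of X, r) \<in> ordLess \<and> B = Nbhd X \<eta>)"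

definition kappa_open :: "'k rel \<Rightarrow> ('k \<Rightarrow> 'k) set \<Rightarrow> bool" where
  "kappa_open r U \<longleftrightarrow>
     (\<exists>S. S \<subseteq> Collect (basic_kopen r) \<and> (card_of S, r) \<in> ordLeq \<and> U = \<Union>S)"

inductive kappa_borel :: "'k rel \<Rightarrow> ('k \<Rightarrow> 'k) set \<Rightarrow> bool" for r where
  basic: "basic_kopen r B \<Longrightarrow> kappa_borel r B"
| compl: "kappa_borel r A \<Longrightarrow> kappa_borel r (- A)"
| union: "(\<And>A. A \<in> S \<Longrightarrow> kappa_borel r A) \<Longrightarrow> (card_of S, r) \<in> ordLeq \<Longrightarrow> kappa_borel r (\<Union>S)"
| inter: "(\<And>A. A \<in> S \<Longrightarrow> kappa_borel r A) \<Longrightarrow> (card_of S, r) \<in> ordLeq \<Longrightarrow> kappa_borel r (\<Inter>S)"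

end

theory Submission
  imports Defs "HOL-Library.FuncSet"
begin

text \<open>Since \<open>\<kappa> > \<omega>\<close>, some initial segment \<open>D\<close> of \<open>\<kappa>\<close> is infinite. Fix \<open>c\<^sub>0 \<noteq> c\<^sub>1\<close> and let
  \<open>U = {\<zeta>. \<zeta>[D] \<subseteq> {c\<^sub>0, c\<^sub>1}}\<close>. It is the union of the sets \<open>N\<^sub>\<eta>\<close> with \<open>\<eta> : D \<rightarrow> {c\<^sub>0, c\<^sub>1}\<close>, hence
  open, and the intersection over \<open>x \<in> D\<close> of the two-element unions of basic sets
  \<open>{\<zeta>. \<zeta> x = c\<^sub>i}\<close>, hence \<open>\<kappa>\<close>-Borel. A basic \<open>\<kappa>\<close>-open set inside \<open>U\<close> must fix every coordinate
  in \<open>D\<close> (otherwise a third value could be put there), so it contains at most one of the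
  \<open>2\<^sup>\<omega>\<close> points of \<open>U\<close> coding subsets of a countable subset of \<open>D\<close>; hence \<open>U\<close> is not a union
  of \<open>\<kappa> < 2\<^sup>\<omega>\<close> of them.\<close>

unbundle cardinal_syntax

lemma card_of_ordLeq_card_order:
  fixes r :: "'k rel" and A :: "'k set"
  assumes "card_order r"
  shows "|A| \<le>o r"
proof -
  have "|A| \<le>o |UNIV :: 'k set|" by (rule card_of_mono1) simp
  moreover have "|UNIV :: 'k set| =o r"
    using card_of_unique[OF assms] ordIso_symmetric by blast
  ultimately show ?thesis using ordLeq_ordIso_trans by blast
qed

lemma card_order_infinite_underS:
  assumes "card_order r" and "natLeq <o r"
  obtains a where "infinite (underS r a)"
proof -
  have "Well_order r"
    using card_order_on_Card_order[OF assms(1)] card_order_on_well_order_on by blast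
  then obtain a where "natLeq =o Restr r (underS r a)"
    using assms(2) ordLess_iff_ordIso_Restr natLeq_Well_order by blast
  hence "|UNIV :: nat set| =o |Field (Restr r (underS r a))|"
    using card_of_cong Field_natLeq by metis
  hence "infinite (Field (Restr r (underS r a)))"
    using card_of_ordIso_finite by blast
  hence "infinite (underS r a)"
    using finite_subset[OF Field_Restr_subset] by blast
  thus thesis by (rule that)
qed

lemma basic_kopen_Nbhd_finite:
  assumes "natLeq \<le>o r" and "finite X"
  shows "basic_kopen r (Nbhd X \<eta>)"
  using assms finite_iff_ordLess_natLeq ordLess_ordLeq_trans
  unfolding basic_kopen_def by blast

lemma kappa_borel_UN:
  assumes "\<And>i. i \<in> I \<Longrightarrow> kappa_borel r (F i)" and "|I| \<le>o r"
  shows "kappa_borel r (\<Union>i\<in>I. F i)"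
  using assms card_of_image[of F I] ordLeq_transitive
  by (blast intro: kappa_borel.union)

lemma kappa_borel_INT:
  assumes "\<And>i. i \<in> I \<Longrightarrow> kappa_borel r (F i)" and "|I| \<le>o r"
  shows "kappa_borel r (\<Inter>i\<in>I. F i)"
  using assms card_of_image[of F I] ordLeq_transitive
  by (blast intro: kappa_borel.inter)

lemma usual_open_funcset_underS: "usual_open r (underS r a \<rightarrow> C)"
  unfolding usual_open_def
proof (intro exI conjI)
  show "{Nbhd (underS r a) \<eta> | \<eta>. \<eta> \<in> underS r a \<rightarrow> C}
      \<subseteq> {Nbhd (underS r a) \<eta> | a \<eta>. True}"
    by blast
  show "underS r a \<rightarrow> C = \<Union>{Nbhd (underS r a) \<eta> | \<eta>. \<eta> \<in> underS r a \<rightarrow> C}"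
    unfolding Nbhd_def by (auto simp: Pi_def)
qed

lemma kappa_borel_funcset:
  fixes r :: "'k rel" and D C :: "'k set"
  assumes "card_order r" and "natLeq \<le>o r"
  shows "kappa_borel r (D \<rightarrow> C)"
proof -
  have "D \<rightarrow> C = (\<Inter>x\<in>D. \<Union>c\<in>C. Nbhd {x} (\<lambda>_. c))"
    unfolding Nbhd_def by auto
  moreover have "kappa_borel r (\<Inter>x\<in>D. \<Union>c\<in>C. Nbhd {x} (\<lambda>_. c))"
    using assms card_of_ordLeq_card_order
    by (intro kappa_borel_INT kappa_borel_UN kappa_borel.basic basic_kopen_Nbhd_finite) auto
  ultimately show ?thesis by simp
qed

lemma Nbhd_subset_funcset_imp_subset:
  assumes "Nbhd X \<eta> \<subseteq> D \<rightarrow> C" and "C \<noteq> UNIV"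
  shows "D \<subseteq> X"
proof
  fix x assume "x \<in> D"
  obtain c where "c \<notin> C" using assms(2) by blast
  show "x \<in> X"
  proof (rule ccontr)
    assume "x \<notin> X"
    hence "\<eta>(x := c) \<in> Nbhd X \<eta>" unfolding Nbhd_def by simp
    hence "\<eta>(x := c) \<in> D \<rightarrow> C" using assms(1) by blast
    thus False using Pi_mem[OF _ \<open>x \<in> D\<close>] \<open>c \<notin> C\<close> by fastforce
  qed
qed

lemma kappa_open_separated_card_ordLeq:
  assumes "kappa_open r U" and "P \<subseteq> U"
    and separated: "\<And>B p q. basic_kopen r B \<Longrightarrow> B \<subseteq> U \<Longrightarrow> p \<in> B \<Longrightarrow> q \<in> B
      \<Longrightarrow> p \<in> P \<Longrightarrow> q \<in> P \<Longrightarrow> p = q"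
  shows "|P| \<le>o r"
proof -
  obtain S where S: "S \<subseteq> Collect (basic_kopen r)" "|S| \<le>o r" "U = \<Union>S"
    using assms(1) unfolding kappa_open_def by blast
  have "\<forall>p\<in>P. \<exists>B. B \<in> S \<and> p \<in> B" using assms(2) S(3) by blast
  then obtain B where B: "\<And>p. p \<in> P \<Longrightarrow> B p \<in> S \<and> p \<in> B p" by metis
  have "inj_on B P"
  proof (rule inj_onI)
    fix p q assume "p \<in> P" "q \<in> P" "B p = B q"
    thus "p = q" using B S separated[of "B p" p q] by blast
  qed
  hence "|P| \<le>o |S|" using B card_of_ordLeq by blast
  thus ?thesis using S(2) ordLeq_transitive by blast
qed

lemma funcset_not_kappa_open:
  assumes "r <o |UNIV :: nat set set|" and "infinite D"
    and "c\<^sub>0 \<noteq> c\<^sub>1" and "{c\<^sub>0, c\<^sub>1} \<subseteq> C" and "C \<noteq> UNIV"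
  shows "\<not> kappa_open r (D \<rightarrow> C)"
proof
  assume U_open: "kappa_open r (D \<rightarrow> C)"
  obtain g :: "nat \<Rightarrow> _" where g: "inj g" "range g \<subseteq> D"
    using infinite_countable_subset[OF assms(2)] by blast
  define z where "z A = (\<lambda>x. if x \<in> g ` A then c\<^sub>1 else c\<^sub>0)" for A
  have z_funcset: "range z \<subseteq> D \<rightarrow> C" using assms(4) unfolding z_def by auto
  have "inj z"
  proof (rule injI)
    fix A A' assume "z A = z A'"
    hence "z A (g n) = z A' (g n)" for n by simp
    thus "A = A'" using assms(3) inj_image_mem_iff[OF g(1)] unfolding z_def by (metis set_eqI)
  qed
  have "|range z| \<le>o r"
  proof (rule kappa_open_separated_card_ordLeq[OF U_open z_funcset])
    fix B p q
    assume "basic_kopen r B" "B \<subseteq> D \<rightarrow> C" "p \<in> B" "q \<in> B" "p \<in> range z" "q \<in> range z"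
    then obtain X \<eta> where "B = Nbhd X \<eta>" "D \<subseteq> X"
      using assms(5) Nbhd_subset_funcset_imp_subset unfolding basic_kopen_def by blast
    hence "p x = q x" if "x \<in> D" for x
      using that \<open>p \<in> B\<close> \<open>q \<in> B\<close> unfolding Nbhd_def by auto
    moreover have "p x = c\<^sub>0 \<and> q x = c\<^sub>0" if "x \<notin> D" for x
      using that g(2) \<open>p \<in> range z\<close> \<open>q \<in> range z\<close>
      unfolding z_def by (auto simp: image_subset_iff)
    ultimately show "p = q" by (metis ext)
  qed
  moreover have "|UNIV :: nat set set| \<le>o |range z|"
    using \<open>inj z\<close> card_of_ordLeq by blast
  ultimately show False
    using assms(1) ordLeq_transitive not_ordLess_ordLeq by blast
qed

theorem proposition2p4:
  fixes r :: "'k rel"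
  assumes "card_order r"
    and "(natLeq, r) \<in> ordLess"
    and "regularCard r"
    and "(r, card_of (UNIV :: nat set set)) \<in> ordLess"
  shows "\<exists>U :: ('k \<Rightarrow> 'k) set. usual_open r U \<and> kappa_borel r U \<and> \<not> kappa_open r U"
proof -
  obtain a where D_infinite: "infinite (underS r a)"
    using card_order_infinite_underS assms(1,2) by blast
  hence "infinite (UNIV :: 'k set)" by (rule infinite_super[OF subset_UNIV])
  then obtain C :: "'k set" where "finite C" "card C = 2"
    using infinite_arbitrarily_large[of UNIV 2] by blast
  then obtain c\<^sub>0 c\<^sub>1 where C: "C = {c\<^sub>0, c\<^sub>1}" "c\<^sub>0 \<noteq> c\<^sub>1" by (meson card_2_iff)
  have "C \<noteq> UNIV" using \<open>finite C\<close> \<open>infinite (UNIV :: 'k set)\<close> by auto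
  hence "\<not> kappa_open r (underS r a \<rightarrow> C)"
    using funcset_not_kappa_open[OF assms(4) D_infinite C(2)] C(1) by blast
  moreover have "kappa_borel r (underS r a \<rightarrow> C)"
    by (rule kappa_borel_funcset[OF assms(1) ordLess_imp_ordLeq[OF assms(2)]])
  ultimately show ?thesis using usual_open_funcset_underS[of r a C] by blast
qed

end
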